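(* Let $P=(p_1,\dots,p_n)$ be points in $\mathbb{R}^d$, $k\ge1$, and $\mathcal{F}$ a constraint for $k$-CMeans. Let $\lambda\ge1$ and let $\mathcal{C}=\{c_1,\dots,c_k\}\subset\mathbb{R}^d$ be the centers of a $\lambda$-approximate solution of the ordinary (unconstrained) $k$-means problem on $P$. Then the Cartesian product $[\mathcal{C}]^k=\mathcal{C}\times\cdots\times\mathcal{C}$ ($k$ factors) contains a $k$-tuple $(q_1,\dots,q_k)$ for which there is $(S_1,\dots,S_k)\in\mathcal{F}$ with $\frac1n\sum_{j=1}^k\sum_{i\in S_j}\|p_i-q_j\|^2\le(18\lambda+16)\,\delta^2_{opt}$.
   Context: A constraint for $k$-CMeans is a nonempty family $\mathcal{F}$ of ordered partitions $(S_1,\dots,S_k)$ of the index set $\{1,\dots,n\}$ into $k$ parts; $\delta^2_{opt}=\min_{(S_j)\in\mathcal{F}}\min_{c'_1,\dots,c'_k\in\mathbb{R}^d}\frac1n\sum_j\sum_{i\in S_j}\|p_i-c'_j\|^2$. The unconstrained $k$-means cost of a set $\mathcal{C}$ of $k$ points is $\omega=\frac1n\sum_{i=1}^n\min_{c\in\mathcal{C}}\|p_i-c\|^2$; $\mathcal{C}$ is a $\lambda$-approximate solution if $\omega\le\lambda\cdot\min_{|\mathcal{C}'|= k}\frac1n\sum_i\min_{c\in\mathcal{C}'}\|p_i-c\|^2$. *)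

theory Defs
  imports "HOL-Analysis.Analysis"
begin

text \<open>Ordered partition (S_1,...,S_k) of the index set {1..n} into k (possibly empty) parts;
  only the values S j for j in {1..k} matter.\<close>
definition ordered_partition :: "nat \<Rightarrow> nat \<Rightarrow> (nat \<Rightarrow> nat set) \<Rightarrow> bool" where
  "ordered_partition n k S \<longleftrightarrow>
     (\<forall>i\<in>{1..k}. \<forall>j\<in>{1..k}. i \<noteq> j \<longrightarrow> S i \<inter> S j = {}) \<and>
     (\<Union>j\<in>{1..k}. S j) = {1..n}"

definition assign_cost :: "nat \<Rightarrow> nat \<Rightarrow> (nat \<Rightarrow> 'a::euclidean_space) \<Rightarrow> (nat \<Rightarrow> nat set) \<Rightarrow> (nat \<Rightarrow> 'a) \<Rightarrow> real" where
  "assign_cost n k p S c = (1 / real n) * (\<Sum>j\<in>{1..k}. \<Sum>i\<in>S j. (norm (p i - c j))\<^sup>2)"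

definition delta_opt_sq :: "nat \<Rightarrow> nat \<Rightarrow> (nat \<Rightarrow> 'a::euclidean_space) \<Rightarrow> (nat \<Rightarrow> nat set) set \<Rightarrow> real" where
  "delta_opt_sq n k p F = Inf {assign_cost n k p S c | S c. S \<in> F}"

definition kmeans_cost :: "nat \<Rightarrow> (nat \<Rightarrow> 'a::euclidean_space) \<Rightarrow> 'a set \<Rightarrow> real" where
  "kmeans_cost n p C = (1 / real n) * (\<Sum>i\<in>{1..n}. Min ((\<lambda>c. (norm (p i - c))\<^sup>2) ` C))"

definition kmeans_opt :: "nat \<Rightarrow> nat \<Rightarrow> (nat \<Rightarrow> 'a::euclidean_space) \<Rightarrow> real" where
  "kmeans_opt n k p = Inf {kmeans_cost n p C' | C'. finite C' \<and> card C' = k}"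

definition approx_kmeans :: "real \<Rightarrow> nat \<Rightarrow> nat \<Rightarrow> (nat \<Rightarrow> 'a::euclidean_space) \<Rightarrow> 'a set \<Rightarrow> bool" where
  "approx_kmeans lam n k p C \<longleftrightarrow> finite C \<and> card C = k \<and> kmeans_cost n p C \<le> lam * kmeans_opt n k p"

end

theory Submission
  imports Defs
begin

text \<open>Round each center c_j of a feasible solution (S, c) to a nearest point q_j of C.
  If y is the point of C nearest to p_i, the triangle inequality gives
  |p_i - q_j| \<le> |p_i - c_j| + |c_j - y| \<le> 2 |p_i - c_j| + |p_i - y|, so
  |p_i - q_j|^2 \<le> 8 |p_i - c_j|^2 + 2 |p_i - y|^2. Summing over i, the cost of (S, q) is at
  most 8 times that of (S, c) plus twice the k-means cost of C, which is at most lam times the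
  unconstrained optimum and hence at most lam times the cost of (S, c). Only finitely many
  costs arise from centers in C, so the cheapest of them is within the factor 8 + 2 lam of the
  constrained optimum, and 8 + 2 lam \<le> 18 lam + 16.\<close>

lemma ex_finite_superset_card:
  assumes "infinite (UNIV :: 'a set)" "finite A" "card A \<le> k"
  obtains B :: "'a set" where "finite B" "card B = k" "A \<subseteq> B"
proof -
  have "infinite (UNIV - A)" using assms(1,2) by (simp add: Diff_infinite_finite)
  then obtain B where B: "finite B" "card B = k - card A" "B \<subseteq> UNIV - A"
    using infinite_arbitrarily_large by blast
  have "card (A \<union> B) = k" using B assms(2,3) by (subst card_Un_disjoint) auto
  then show thesis using that B assms(2) by blast
qed

lemma sum_ordered_partition:
  assumes "ordered_partition n k S"
  shows "(\<Sum>j\<in>{1..k}. \<Sum>i\<in>S j. f i) = (\<Sum>i\<in>{1..n}. f i)"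
proof -
  have cover: "(\<Union>j\<in>{1..k}. S j) = {1..n}"
    and disjoint: "\<forall>i\<in>{1..k}. \<forall>j\<in>{1..k}. i \<noteq> j \<longrightarrow> S i \<inter> S j = {}"
    using assms unfolding ordered_partition_def by auto
  have "\<forall>j\<in>{1..k}. finite (S j)"
    using cover by (metis UN_upper finite_atLeastAtMost finite_subset)
  then have "(\<Sum>i\<in>(\<Union>j\<in>{1..k}. S j). f i) = (\<Sum>j\<in>{1..k}. \<Sum>i\<in>S j. f i)"
    using disjoint by (intro sum.UNION_disjoint) auto
  then show ?thesis using cover by simp
qed

lemma assign_cost_nonneg: "0 \<le> assign_cost n k p S c"
  unfolding assign_cost_def by (intro mult_nonneg_nonneg sum_nonneg) auto

lemma kmeans_cost_nonneg:
  assumes "finite C" "C \<noteq> {}"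
  shows "0 \<le> kmeans_cost n p C"
  unfolding kmeans_cost_def using assms
  by (intro mult_nonneg_nonneg sum_nonneg) auto

lemma delta_opt_sq_nonneg:
  assumes "F \<noteq> {}"
  shows "0 \<le> delta_opt_sq n k p F"
  unfolding delta_opt_sq_def using assms by (intro cInf_greatest) (auto simp: assign_cost_nonneg)

text \<open>Padded to exactly k points, the centers of a constrained solution serve every point at
  most as expensively as its assigned center does.\<close>

lemma kmeans_opt_le_assign_cost:
  fixes p :: "nat \<Rightarrow> 'a::euclidean_space"
  assumes "ordered_partition n k S" "k \<ge> 1"
  shows "kmeans_opt n k p \<le> assign_cost n k p S c"
proof -
  have "infinite (UNIV :: 'a set)" using finite_imp_not_open[of UNIV] by auto
  moreover have "finite (c ` {1..k})" "card (c ` {1..k}) \<le> k"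
    using card_image_le[of "{1..k}" c] by simp_all
  ultimately obtain B where B: "finite B" "card B = k" "c ` {1..k} \<subseteq> B"
    by (rule ex_finite_superset_card)
  have "bdd_below {kmeans_cost n p C' | C'. finite C' \<and> card C' = k}"
  proof (rule bdd_belowI)
    fix x assume "x \<in> {kmeans_cost n p C' | C'. finite C' \<and> card C' = k}"
    then obtain C' where C': "finite C'" "card C' = k" "x = kmeans_cost n p C'" by blast
    then have "C' \<noteq> {}" using assms(2) by auto
    then show "0 \<le> x" using C' kmeans_cost_nonneg by simp
  qed
  then have "kmeans_opt n k p \<le> kmeans_cost n p B"
    unfolding kmeans_opt_def using B(1,2) by (intro cInf_lower) auto
  also have "\<dots> = (1 / real n) * (\<Sum>j\<in>{1..k}. \<Sum>i\<in>S j. Min ((\<lambda>x. (norm (p i - x))\<^sup>2) ` B))"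
    unfolding kmeans_cost_def sum_ordered_partition[OF assms(1)] ..
  also have "\<dots> \<le> assign_cost n k p S c"
    unfolding assign_cost_def using B(1,3) by (intro mult_left_mono sum_mono Min_le imageI) auto
  finally show ?thesis .
qed

lemma norm_sq_le_of_nearer:
  fixes x c q y :: "'a::real_normed_vector"
  assumes "norm (c - q) \<le> norm (c - y)"
  shows "(norm (x - q))\<^sup>2 \<le> 8 * (norm (x - c))\<^sup>2 + 2 * (norm (x - y))\<^sup>2"
proof -
  have "norm (x - q) \<le> norm (x - c) + norm (c - y)"
    using norm_triangle_ineq[of "x - c" "c - q"] assms by simp
  also have "\<dots> \<le> 2 * norm (x - c) + norm (x - y)"
    using norm_triangle_ineq[of "c - x" "x - y"] by (simp add: norm_minus_commute)
  finally have "(norm (x - q))\<^sup>2 \<le> (2 * norm (x - c) + norm (x - y))\<^sup>2"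
    by (intro power_mono) auto
  also have "\<dots> \<le> 8 * (norm (x - c))\<^sup>2 + 2 * (norm (x - y))\<^sup>2"
    using sum_squares_ge_zero[of "2 * norm (x - c) - norm (x - y)" 0]
    by (simp add: power2_eq_square algebra_simps)
  finally show ?thesis .
qed

lemma assign_cost_nearest_le:
  assumes "ordered_partition n k S" "finite C" "C \<noteq> {}"
    and nearest: "\<forall>j\<in>{1..k}. \<forall>y\<in>C. norm (c j - q j) \<le> norm (c j - y)"
  shows "assign_cost n k p S q \<le> 8 * assign_cost n k p S c + 2 * kmeans_cost n p C"
proof -
  define dist_C where "dist_C i = Min ((\<lambda>y. (norm (p i - y))\<^sup>2) ` C)" for i
  have pointwise: "(norm (p i - q j))\<^sup>2 \<le> 8 * (norm (p i - c j))\<^sup>2 + 2 * dist_C i"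
    if "j \<in> {1..k}" for i j
  proof -
    have "dist_C i \<in> (\<lambda>y. (norm (p i - y))\<^sup>2) ` C"
      unfolding dist_C_def using assms(2,3) by (intro Min_in) auto
    then obtain y where "y \<in> C" "dist_C i = (norm (p i - y))\<^sup>2" by blast
    moreover have "norm (c j - q j) \<le> norm (c j - y)" using nearest that \<open>y \<in> C\<close> by blast
    ultimately show ?thesis using norm_sq_le_of_nearer[of "c j" "q j" y "p i"] by simp
  qed
  have "assign_cost n k p S q
      \<le> (1 / real n) * (\<Sum>j\<in>{1..k}. \<Sum>i\<in>S j. 8 * (norm (p i - c j))\<^sup>2 + 2 * dist_C i)"
    unfolding assign_cost_def by (intro mult_left_mono sum_mono pointwise) auto
  also have "\<dots> = 8 * assign_cost n k p S c + 2 * ((1 / real n) * (\<Sum>j\<in>{1..k}. \<Sum>i\<in>S j. dist_C i))"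
    unfolding assign_cost_def sum.distrib sum_distrib_left[symmetric] by (simp add: algebra_simps)
  also have "\<dots> = 8 * assign_cost n k p S c + 2 * kmeans_cost n p C"
    unfolding kmeans_cost_def dist_C_def sum_ordered_partition[OF assms(1)] ..
  finally show ?thesis .
qed

lemma ex_centers_in_approx_assign_cost_le:
  fixes p :: "nat \<Rightarrow> 'a::euclidean_space"
  assumes "ordered_partition n k S" "k \<ge> 1" "lam \<ge> 0" "approx_kmeans lam n k p C"
  shows "\<exists>q. (\<forall>j\<in>{1..k}. q j \<in> C) \<and> assign_cost n k p S q \<le> (8 + 2 * lam) * assign_cost n k p S c"
proof -
  have C: "finite C" "C \<noteq> {}" and approx: "kmeans_cost n p C \<le> lam * kmeans_opt n k p"
    using assms(2,4) unfolding approx_kmeans_def by auto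
  define q where "q j = arg_min_on (\<lambda>x. norm (c j - x)) C" for j
  have in_C: "q j \<in> C" for j
    unfolding q_def by (rule arg_min_if_finite(1)[OF C])
  have nearest: "norm (c j - q j) \<le> norm (c j - y)" if "y \<in> C" for j y
    unfolding q_def using C that by (rule arg_min_least)
  have "assign_cost n k p S q \<le> 8 * assign_cost n k p S c + 2 * kmeans_cost n p C"
    by (rule assign_cost_nearest_le[OF assms(1) C]) (simp add: nearest)
  moreover have "kmeans_cost n p C \<le> lam * assign_cost n k p S c"
    using approx mult_left_mono[OF kmeans_opt_le_assign_cost[OF assms(1,2), of p c] assms(3)]
    by linarith
  ultimately have "assign_cost n k p S q \<le> (8 + 2 * lam) * assign_cost n k p S c"
    by (simp add: algebra_simps)
  then show ?thesis using in_C by blast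
qed

lemma finite_assign_costs:
  assumes "finite C"
  shows "finite {assign_cost n k p S q | S q. ordered_partition n k S \<and> (\<forall>j\<in>{1..k}. q j \<in> C)}"
proof -
  let ?choices = "PiE {1..k} (\<lambda>_. Pow {1..n}) \<times> PiE {1..k} (\<lambda>_. C)"
  have "assign_cost n k p S q \<in> (\<lambda>(S, q). assign_cost n k p S q) ` ?choices"
    if "ordered_partition n k S" "\<forall>j\<in>{1..k}. q j \<in> C" for S q
  proof (rule image_eqI)
    show "assign_cost n k p S q = (\<lambda>(S, q). assign_cost n k p S q) (restrict S {1..k}, restrict q {1..k})"
      unfolding assign_cost_def by (auto intro!: sum.cong)
    show "(restrict S {1..k}, restrict q {1..k}) \<in> ?choices"
      using that unfolding ordered_partition_def by auto
  qed
  then have "{assign_cost n k p S q | S q. ordered_partition n k S \<and> (\<forall>j\<in>{1..k}. q j \<in> C)}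
      \<subseteq> (\<lambda>(S, q). assign_cost n k p S q) ` ?choices"
    by blast
  moreover have "finite ?choices" using assms by (simp add: finite_PiE)
  ultimately show ?thesis using finite_subset by blast
qed

lemma ex_le_mult_Inf:
  fixes A D :: "real set"
  assumes "finite A" "D \<noteq> {}" "K > 0" "\<forall>d\<in>D. \<exists>a\<in>A. a \<le> K * d"
  shows "\<exists>a\<in>A. a \<le> K * Inf D"
proof -
  have "A \<noteq> {}" using assms(2,4) by blast
  have "Min A / K \<le> Inf D"
  proof (rule cInf_greatest[OF assms(2)])
    fix d assume "d \<in> D"
    then obtain a where "a \<in> A" "a \<le> K * d" using assms(4) by blast
    then have "Min A \<le> K * d" using Min_le[OF assms(1)] by fastforce
    then show "Min A / K \<le> d" using assms(3) by (simp add: pos_divide_le_eq algebra_simps)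
  qed
  then have "Min A \<le> K * Inf D" using assms(3) by (simp add: pos_divide_le_eq algebra_simps)
  then show ?thesis using Min_in[OF assms(1) \<open>A \<noteq> {}\<close>] by blast
qed

lemma ex_centers_in_approx_le_delta_opt_sq:
  fixes p :: "nat \<Rightarrow> 'a::euclidean_space"
  assumes "k \<ge> 1" "F \<noteq> {}" "\<forall>S\<in>F. ordered_partition n k S"
    and "lam \<ge> 0" "approx_kmeans lam n k p C"
  shows "\<exists>q. (\<forall>j\<in>{1..k}. q j \<in> C) \<and>
           (\<exists>S\<in>F. assign_cost n k p S q \<le> (8 + 2 * lam) * delta_opt_sq n k p F)"
proof -
  let ?rounded = "{assign_cost n k p S q | S q. S \<in> F \<and> (\<forall>j\<in>{1..k}. q j \<in> C)}"
  let ?feasible = "{assign_cost n k p S c | S c. S \<in> F}"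
  have "?rounded \<subseteq> {assign_cost n k p S q | S q. ordered_partition n k S \<and> (\<forall>j\<in>{1..k}. q j \<in> C)}"
    using assms(3) by blast
  moreover have "finite C" using assms(5) unfolding approx_kmeans_def by blast
  ultimately have "finite ?rounded" using finite_assign_costs finite_subset by blast
  moreover have "\<forall>d\<in>?feasible. \<exists>a\<in>?rounded. a \<le> (8 + 2 * lam) * d"
  proof
    fix d assume "d \<in> ?feasible"
    then obtain S c where "S \<in> F" "d = assign_cost n k p S c" by blast
    moreover obtain q where "\<forall>j\<in>{1..k}. q j \<in> C"
      "assign_cost n k p S q \<le> (8 + 2 * lam) * assign_cost n k p S c"
      using ex_centers_in_approx_assign_cost_le[of n k S lam p C c] assms \<open>S \<in> F\<close> by auto
    ultimately show "\<exists>a\<in>?rounded. a \<le> (8 + 2 * lam) * d" by blast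
  qed
  moreover have "?feasible \<noteq> {}" using assms(2) by blast
  ultimately have "\<exists>a\<in>?rounded. a \<le> (8 + 2 * lam) * delta_opt_sq n k p F"
    unfolding delta_opt_sq_def using assms(4) by (intro ex_le_mult_Inf) auto
  then show ?thesis by blast
qed

theorem theorem2:
  fixes p :: "nat \<Rightarrow> 'a::euclidean_space" and n k :: nat
    and F :: "(nat \<Rightarrow> nat set) set" and lam :: real and C :: "'a set"
  assumes "n \<ge> 1" and "k \<ge> 1"
    and "F \<noteq> {}" and "\<forall>S\<in>F. ordered_partition n k S"
    and "lam \<ge> 1"
    and "approx_kmeans lam n k p C"
  shows "\<exists>q. (\<forall>j\<in>{1..k}. q j \<in> C) \<and>
           (\<exists>S\<in>F. assign_cost n k p S q \<le> (18 * lam + 16) * delta_opt_sq n k p F)"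
proof -
  obtain q S where "\<forall>j\<in>{1..k}. q j \<in> C" "S \<in> F"
    and "assign_cost n k p S q \<le> (8 + 2 * lam) * delta_opt_sq n k p F"
    using ex_centers_in_approx_le_delta_opt_sq[of k F n lam p C] assms(2-6) by auto
  moreover have "(8 + 2 * lam) * delta_opt_sq n k p F \<le> (18 * lam + 16) * delta_opt_sq n k p F"
    using delta_opt_sq_nonneg[OF assms(3)] assms(5) by (intro mult_right_mono) auto
  ultimately show ?thesis by (meson order_trans)
qed

end
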